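(* Consider the delay differential system \[ \begin{aligned} \dot S_h(t)&=\beta_h-C_{vh}\frac{I_v(t)}{N_v(t)}S_h(t)-\mu_hS_h(t),\\ \dot I_h(t)&=C_{vh}\frac{I_v(t-\tau)}{N_v(t-\tau)}S_h(t-\tau)-\mu_hI_h(t),\\ \dot S_v(t)&=\beta_v-C_{hv}I_h(t)S_v(t)-\mu_vS_v(t),\\ \dot I_v(t)&=C_{hv}I_h(t)S_v(t)-\mu_vI_v(t), \end{aligned} \] where $N_v(t)=S_v(t)+I_v(t)$, the parameters $\beta_h,\beta_v,\mu_h,\mu_v,C_{vh},C_{hv}$ are positive and $\tau\ge 0$. For every initial function $\varphi\in C_+$, the solution $x(t)=(S_h(t),I_h(t),S_v(t),I_v(t))^T$ of this system through $\varphi$ exists on $[0,\infty)$, is unique, nonnegative, and ultimately bounded on $[0,\infty)$.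
   Context: $C=C([-\tau,0],\mathbb{R}_+^4)$ with the sup-norm, $\mathbb{R}_+=[0,\infty)$, and the phase space is $C_+=\{\varphi=(\varphi_1,\varphi_2,\varphi_3,\varphi_4)^T\in C:\ \varphi_3(\theta)+\varphi_4(\theta)>0 \text{ for all }\theta\in[-\tau,0]\}$. The solution through $\varphi$ satisfies $x(\theta)=\varphi(\theta)$ for $\theta\in[-\tau,0]$. *)

theory Defs
  imports "HOL-Analysis.Analysis"
begin

text \<open>States are vectors in real^4 with components
  1 = S_h, 2 = I_h, 3 = S_v, 4 = I_v.\<close>

definition in_Cplus :: "real \<Rightarrow> (real \<Rightarrow> real^4) \<Rightarrow> bool" where
  "in_Cplus \<tau> \<phi> \<longleftrightarrow>
     continuous_on {-\<tau>..0} \<phi> \<and>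
     (\<forall>\<theta>\<in>{-\<tau>..0}. \<forall>i. 0 \<le> \<phi> \<theta> $ i) \<and>
     (\<forall>\<theta>\<in>{-\<tau>..0}. \<phi> \<theta> $ 3 + \<phi> \<theta> $ 4 > 0)"

definition rhs :: "real \<Rightarrow> real \<Rightarrow> real \<Rightarrow> real \<Rightarrow> real \<Rightarrow> real \<Rightarrow>
                   real^4 \<Rightarrow> real^4 \<Rightarrow> real^4" where
  "rhs \<beta>h \<beta>v \<mu>h \<mu>v Cvh Chv xt xd =
     (\<chi> i. if i = 1 then \<beta>h - Cvh * (xt $ 4 / (xt $ 3 + xt $ 4)) * xt $ 1 - \<mu>h * xt $ 1
           else if i = 2 then Cvh * (xd $ 4 / (xd $ 3 + xd $ 4)) * xd $ 1 - \<mu>h * xt $ 2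
           else if i = 3 then \<beta>v - Chv * xt $ 2 * xt $ 3 - \<mu>v * xt $ 3
           else Chv * xt $ 2 * xt $ 3 - \<mu>v * xt $ 4)"

definition is_solution :: "real \<Rightarrow> real \<Rightarrow> real \<Rightarrow> real \<Rightarrow> real \<Rightarrow> real \<Rightarrow> real \<Rightarrow>
                           (real \<Rightarrow> real^4) \<Rightarrow> (real \<Rightarrow> real^4) \<Rightarrow> bool" where
  "is_solution \<beta>h \<beta>v \<mu>h \<mu>v Cvh Chv \<tau> \<phi> x \<longleftrightarrow>
     (\<forall>\<theta>\<in>{-\<tau>..0}. x \<theta> = \<phi> \<theta>) \<and>
     continuous_on {-\<tau>..} x \<and>
     (\<forall>t\<ge>0. (x has_vector_derivative rhs \<beta>h \<beta>v \<mu>h \<mu>v Cvh Chv (x t) (x (t - \<tau>)))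
               (at t within {0..}))"

end

theory Submission
  imports Defs
begin

text \<open>The vector population \<open>N\<^sub>v = S\<^sub>v + I\<^sub>v\<close> obeys the closed equation \<open>N\<^sub>v' = \<beta>\<^sub>v - \<mu>\<^sub>v N\<^sub>v\<close>,
  so along every solution it is an explicit function of time, bounded below by a positive constant.
  The incidence term \<open>C\<^sub>v\<^sub>h (I\<^sub>v/N\<^sub>v) S\<^sub>h\<close> is therefore Lipschitz along solutions, and uniqueness
  follows by showing agreement on successive windows short enough for the difference to contract.
  For existence the right-hand side is truncated outside a box \<open>{0..M}\<close> whose faces are repelling:
  the truncated delay equation is globally Lipschitz, so Picard iteration converges in an
  exponentially weighted sup norm, and a barrier argument keeps its solution inside the box, where
  it solves the original system. Nonnegativity of every solution then follows from uniqueness, and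
  ultimate boundedness from the differential inequalities \<open>S\<^sub>h' \<le> \<beta>\<^sub>h - \<mu>\<^sub>h S\<^sub>h\<close>,
  \<open>I\<^sub>h' \<le> C\<^sub>v\<^sub>h S\<^sub>h(t - \<tau>) - \<mu>\<^sub>h I\<^sub>h\<close> and the equation for \<open>N\<^sub>v\<close>.\<close>

section \<open>Scalar differential inequalities\<close>

lemma has_vector_derivative_nth:
  "(x has_vector_derivative D) F \<Longrightarrow> ((\<lambda>t. x t $ i) has_real_derivative D $ i) F"
  using bounded_linear.has_vector_derivative[OF bounded_linear_vec_nth, of x D F i]
  by (simp add: has_real_derivative_iff_has_vector_derivative)

lemma has_vector_derivative_at_if_within_atLeast:
  assumes "(f has_vector_derivative D) (at t within {a..})" "a < (t::real)"
  shows "(f has_vector_derivative D) (at t)"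
  using assms at_within_interior[of t "{a..}"] by simp

lemma DERIV_nonpos_above_imp_le:
  fixes f :: "real \<Rightarrow> real"
  assumes cont: "continuous_on {a..} f" and start: "f a \<le> c"
    and deriv: "\<And>t. a < t \<Longrightarrow> c < f t \<Longrightarrow> \<exists>d. (f has_real_derivative d) (at t) \<and> d \<le> 0"
    and "a \<le> s"
  shows "f s \<le> c"
proof (rule ccontr)
  assume "\<not> f s \<le> c"
  define A where "A = {a..s} \<inter> f -` {..c}"
  have "closed A" unfolding A_def
    by (rule continuous_closed_preimage) (auto intro: continuous_on_subset[OF cont])
  moreover have "a \<in> A" "bdd_above A" using start \<open>a \<le> s\<close> by (auto simp: A_def)
  ultimately have last: "Sup A \<in> A" using closed_contains_Sup by blast
  with \<open>\<not> f s \<le> c\<close> have last_lt: "Sup A < s" and "a \<le> Sup A" by (auto simp: A_def less_le)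
  have above: "c < f t" if "Sup A < t" "t \<le> s" for t
    using that \<open>a \<le> Sup A\<close> cSup_upper[OF _ \<open>bdd_above A\<close>, of t] by (force simp: A_def)
  obtain l z where z: "Sup A < z" "z < s" "DERIV f z :> l" "f s - f (Sup A) = (s - Sup A) * l"
  proof -
    have "\<exists>l z. Sup A < z \<and> z < s \<and> DERIV f z :> l \<and> f s - f (Sup A) = (s - Sup A) * l"
    proof (rule MVT[OF last_lt])
      show "continuous_on {Sup A..s} f" using \<open>a \<le> Sup A\<close> by (auto intro: continuous_on_subset[OF cont])
      show "f differentiable (at x)" if "Sup A < x" "x < s" for x
        using deriv[of x] above[of x] that \<open>a \<le> Sup A\<close> by (auto simp: real_differentiable_def)
    qed
    then show ?thesis using that by blast
  qed
  obtain d where d: "DERIV f z :> d" "d \<le> 0" using deriv[of z] above[of z] z \<open>a \<le> Sup A\<close> by auto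
  have "l = d" using DERIV_unique[OF z(3) d(1)] .
  then have "(s - Sup A) * l \<le> 0" using d(2) last_lt by (simp add: mult_nonneg_nonpos)
  then have "f s \<le> f (Sup A)" using z(4) by linarith
  with last \<open>\<not> f s \<le> c\<close> show False by (auto simp: A_def)
qed

lemma DERIV_nonneg_below_imp_ge:
  fixes f :: "real \<Rightarrow> real"
  assumes cont: "continuous_on {a..} f" and start: "c \<le> f a"
    and deriv: "\<And>t. a < t \<Longrightarrow> f t < c \<Longrightarrow> \<exists>d. (f has_real_derivative d) (at t) \<and> 0 \<le> d"
    and "a \<le> s"
  shows "c \<le> f s"
proof -
  have "- f s \<le> - c"
  proof (rule DERIV_nonpos_above_imp_le[of a "\<lambda>t. - f t"])
    show "continuous_on {a..} (\<lambda>t. - f t)" using cont by (intro continuous_intros)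
    fix t assume "a < t" "- c < - f t"
    then obtain d where "(f has_real_derivative d) (at t)" "0 \<le> d" using deriv[of t] by auto
    then show "\<exists>d. ((\<lambda>t. - f t) has_real_derivative d) (at t) \<and> d \<le> 0"
      by (intro exI[of _ "-d"]) (auto intro: derivative_intros)
  qed (use start \<open>a \<le> s\<close> in auto)
  then show ?thesis by simp
qed

lemma linear_decay_ODE_explicit:
  fixes f :: "real \<Rightarrow> real"
  assumes b: "0 < b"
    and deriv: "\<And>t. 0 \<le> t \<Longrightarrow> (f has_real_derivative A - b * f t) (at t within {0..})"
    and "0 \<le> t"
  shows "f t = A/b + (f 0 - A/b) * exp (- b * t)"
proof -
  define g where "g t = (f t - A/b) * exp (b * t)" for t
  have "\<exists>c. \<forall>x\<in>{0..}. g x = c"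
  proof (rule has_field_derivative_zero_constant)
    fix x :: real assume "x \<in> {0..}"
    then have "(g has_real_derivative (A - b * f x) * exp (b * x) + (f x - A/b) * (exp (b * x) * b))
        (at x within {0..})"
      unfolding g_def using deriv \<open>x \<in> {0..}\<close> by (intro derivative_eq_intros) auto
    then show "(g has_real_derivative 0) (at x within {0..})" using b by (simp add: field_simps)
  qed auto
  then have "g t = g 0" using \<open>0 \<le> t\<close> by force
  then have "f t - A/b = (f 0 - A/b) * exp (- b * t)"
    by (simp add: g_def exp_minus field_simps)
  then show ?thesis by simp
qed

lemma DERIV_le_decay_imp_eventually_le:
  fixes f :: "real \<Rightarrow> real"
  assumes b: "0 < b" and "0 < \<epsilon>"
    and deriv: "\<And>t. a \<le> t \<Longrightarrow> \<exists>d. (f has_real_derivative d) (at t) \<and> d \<le> A - b * f t"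
  shows "eventually (\<lambda>t. f t \<le> A/b + \<epsilon>) at_top"
proof -
  define g where "g t = (f t - A/b) * exp (b * t)" for t
  have g_le: "g t \<le> g a" if "a \<le> t" for t
  proof (rule DERIV_nonpos_imp_nonincreasing[OF that])
    fix x assume "a \<le> x" "x \<le> t"
    then obtain d where d: "(f has_real_derivative d) (at x)" "d \<le> A - b * f x" using deriv by blast
    have "(g has_real_derivative d * exp (b * x) + (f x - A/b) * (exp (b * x) * b)) (at x)"
      unfolding g_def using d(1) by (intro derivative_eq_intros) auto
    moreover have "d * exp (b * x) + (f x - A/b) * (exp (b * x) * b) = (d - (A - b * f x)) * exp (b * x)"
      using b by (simp add: field_simps)
    moreover have "(d - (A - b * f x)) * exp (b * x) \<le> 0" using d(2) by (simp add: mult_nonpos_nonneg)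
    ultimately show "\<exists>y. (g has_real_derivative y) (at x) \<and> y \<le> 0" by auto
  qed
  have "((\<lambda>t. g a * exp (- b * t)) \<longlongrightarrow> g a * 0) at_top"
    by (intro tendsto_mult tendsto_const filterlim_compose[OF exp_at_bot]
        filterlim_tendsto_neg_mult_at_bot[OF tendsto_const] filterlim_ident) (use b in auto)
  then have "eventually (\<lambda>t. g a * exp (- b * t) < \<epsilon>) at_top"
    using \<open>0 < \<epsilon>\<close> by (simp add: order_tendstoD(2))
  moreover have "eventually (\<lambda>t. a \<le> t) at_top" by (rule eventually_ge_at_top)
  ultimately show ?thesis
  proof eventually_elim
    case (elim t)
    have "f t - A/b = g t * exp (- b * t)" by (simp add: g_def mult.assoc flip: exp_add)
    also have "\<dots> \<le> g a * exp (- b * t)" using g_le[OF elim(2)] by (simp add: mult_right_mono)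
    finally show ?case using elim(1) by linarith
  qed
qed

section \<open>Delay equations with a globally Lipschitz right-hand side\<close>

lemma integral_has_vector_derivative_atLeast:
  fixes g :: "real \<Rightarrow> 'a::banach"
  assumes "continuous_on {a..} g" "a \<le> t"
  shows "((\<lambda>s. integral {a..s} g) has_vector_derivative g t) (at t within {a..})"
proof -
  have "((\<lambda>s. integral {a..s} g) has_vector_derivative g t) (at t within {a..t+1})"
    using assms by (intro integral_has_vector_derivative continuous_on_subset[OF assms(1)]) auto
  moreover have "at t within {a..t+1} = at t within {a..}"
    by (rule at_within_nhd[of _ "{..<t+1}"]) auto
  ultimately show ?thesis by simp
qed

lemma has_integral_exp_scaled:
  fixes k :: real
  assumes "k \<noteq> 0" "0 \<le> t"
  shows "((\<lambda>r. exp (k * r)) has_integral (exp (k * t) - 1) / k) {0..t}"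
proof -
  have "((\<lambda>r. exp (k * r)) has_integral exp (k * t) / k - exp (k * 0) / k) {0..t}"
  proof (rule fundamental_theorem_of_calculus[OF \<open>0 \<le> t\<close>])
    fix x assume "x \<in> {0..t}"
    have "((\<lambda>r. exp (k * r) / k) has_real_derivative exp (k * x) * (k * 1) / k) (at x within {0..t})"
      using assms by (intro derivative_eq_intros) auto
    then show "((\<lambda>r. exp (k * r) / k) has_vector_derivative exp (k * x)) (at x within {0..t})"
      using assms by (simp add: has_real_derivative_iff_has_vector_derivative)
  qed
  then show ?thesis using \<open>k \<noteq> 0\<close> by (simp add: diff_divide_distrib)
qed

lemma norm_diff_le_of_vector_derivative_bound:
  fixes f :: "real \<Rightarrow> 'a::real_normed_vector"
  assumes "a \<le> b"
    and deriv: "\<And>x. x \<in> {a..b} \<Longrightarrow> (f has_vector_derivative f' x) (at x within {a..b})"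
    and bound: "\<And>x. x \<in> {a..b} \<Longrightarrow> norm (f' x) \<le> B"
  shows "norm (f b - f a) \<le> B * (b - a)"
proof -
  have "norm (f b - f a) \<le> B * norm (b - a)"
  proof (rule differentiable_bound[of "{a..b}" f "\<lambda>x h. h *\<^sub>R f' x" B b a])
    fix x assume x: "x \<in> {a..b}"
    show "(f has_derivative (\<lambda>h. h *\<^sub>R f' x)) (at x within {a..b})"
      using deriv[OF x] by (simp add: has_vector_derivative_def)
    show "onorm (\<lambda>h::real. h *\<^sub>R f' x) \<le> B"
      using bound[OF x] onorm_scaleR_left[OF bounded_linear_ident, of "f' x"] by (simp add: onorm_id)
  qed (use \<open>a \<le> b\<close> in auto)
  then show ?thesis using \<open>a \<le> b\<close> by simp
qed

lemma continuous_on_Icc_norm_bound: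
  fixes x :: "real \<Rightarrow> 'a::real_normed_vector"
  assumes "continuous_on {a..b} x"
  obtains R where "\<And>s. s \<in> {a..b} \<Longrightarrow> norm (x s) \<le> R"
proof -
  have "bounded (x ` {a..b})" by (intro compact_imp_bounded compact_continuous_image assms) auto
  then obtain R where "\<forall>s\<in>{a..b}. norm (x s) \<le> R" by (auto simp: bounded_iff)
  then show ?thesis using that by blast
qed

locale lipschitz_delay_equation =
  fixes \<tau> L K :: real and G :: "real \<Rightarrow> 'a::banach \<Rightarrow> 'a \<Rightarrow> 'a" and \<phi> :: "real \<Rightarrow> 'a"
  assumes delay_nonneg: "0 \<le> \<tau>" and lipschitz_nonneg: "0 \<le> L"
    and continuous_along: "\<And>u. continuous_on UNIV u \<Longrightarrow> continuous_on UNIV (\<lambda>r. G r (u r) (u (r - \<tau>)))"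
    and lipschitz: "\<And>t x y x' y'. norm (G t x y - G t x' y') \<le> L * (norm (x - x') + norm (y - y'))"
    and bounded: "\<And>t x y. norm (G t x y) \<le> K"
    and initial_continuous: "continuous_on {-\<tau>..0} \<phi>"
begin

definition history :: "real \<Rightarrow> 'a" where
  "history t = \<phi> (max (-\<tau>) (min 0 t))"

definition picard :: "(real \<Rightarrow> 'a) \<Rightarrow> real \<Rightarrow> 'a" where
  "picard u t = (if t \<le> 0 then history t else \<phi> 0 + integral {0..t} (\<lambda>r. G r (u r) (u (r - \<tau>))))"

text \<open>Picard iteration is a contraction for the weighted norm \<open>sup\<^sub>t e\<^bsup>-rate t\<^esup> \<parallel>u t\<parallel>\<close>;
  a function \<open>u\<close> is represented by the bounded function \<open>w = e\<^bsup>-rate t\<^esup> u\<close>.\<close>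

definition rate :: real where
  "rate = 4 * L + 1"

definition unweighted :: "(real \<Rightarrow>\<^sub>C 'a) \<Rightarrow> real \<Rightarrow> 'a" where
  "unweighted w t = exp (rate * max t 0) *\<^sub>R w t"

definition weighted_picard :: "(real \<Rightarrow>\<^sub>C 'a) \<Rightarrow> real \<Rightarrow>\<^sub>C 'a" where
  "weighted_picard w = Bcontfun (\<lambda>t. exp (- rate * max t 0) *\<^sub>R picard (unweighted w) t)"

lemma rate_pos: "0 < rate"
  using lipschitz_nonneg by (simp add: rate_def)

lemma history_continuous: "continuous_on UNIV history"
  unfolding history_def
  by (rule continuous_on_compose2[OF initial_continuous]) (auto intro!: continuous_intros simp: delay_nonneg)

lemma history_bounded: "\<exists>B. \<forall>t. norm (history t) \<le> B"
proof -
  obtain B where "\<And>\<theta>. \<theta> \<in> {-\<tau>..0} \<Longrightarrow> norm (\<phi> \<theta>) \<le> B"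
    using continuous_on_Icc_norm_bound[OF initial_continuous] by blast
  then have "norm (history t) \<le> B" for t using delay_nonneg by (simp add: history_def)
  then show ?thesis by blast
qed

lemma integrand_continuous:
  "continuous_on UNIV u \<Longrightarrow> continuous_on A (\<lambda>r. G r (u r) (u (r - \<tau>)))"
  using continuous_along continuous_on_subset by blast

lemma picard_continuous:
  assumes "continuous_on UNIV u"
  shows "continuous_on UNIV (picard u)"
proof -
  have "continuous_on {0..} (\<lambda>t. integral {0..t} (\<lambda>r. G r (u r) (u (r - \<tau>))))"
    by (rule continuous_on_vector_derivative)
      (auto intro: integral_has_vector_derivative_atLeast integrand_continuous[OF assms])
  then have "continuous_on {t. 0 \<le> t} (\<lambda>t. \<phi> 0 + integral {0..t} (\<lambda>r. G r (u r) (u (r - \<tau>))))"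
    by (auto intro!: continuous_intros simp: atLeast_def)
  moreover have "continuous_on {t. t \<le> 0} history"
    using history_continuous continuous_on_subset by blast
  ultimately show ?thesis unfolding picard_def[abs_def]
    by (intro continuous_on_cases_le[where h="\<lambda>t. t" and a=0, simplified])
      (auto simp: history_def max_def delay_nonneg)
qed

lemma picard_bounded:
  assumes "continuous_on UNIV u"
  shows "\<exists>B. \<forall>t. norm (exp (- rate * max t 0) *\<^sub>R picard u t) \<le> B"
proof -
  obtain B where B: "\<And>t. norm (history t) \<le> B" using history_bounded by blast
  have "0 \<le> K" using bounded norm_ge_zero order_trans by blast
  have "norm (exp (- rate * max t 0) *\<^sub>R picard u t) \<le> B + K / rate" for t
  proof (cases "t \<le> 0")
    case True
    then show ?thesis using B[of t] divide_nonneg_pos[OF \<open>0 \<le> K\<close> rate_pos] by (simp add: picard_def)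
  next
    case False
    let ?I = "integral {0..t} (\<lambda>r. G r (u r) (u (r - \<tau>)))"
    have "norm ?I \<le> K * (t - 0)"
      using False by (intro integral_bound integrand_continuous[OF assms] bounded) auto
    have "rate * t \<le> exp (rate * t)" using exp_ge_add_one_self[of "rate * t"] by linarith
    then have decay: "t * exp (- rate * t) \<le> 1 / rate" using rate_pos by (simp add: exp_minus field_simps)
    have "norm (\<phi> 0) \<le> B" using B[of 0] delay_nonneg by (simp add: history_def)
    have "norm (exp (- rate * max t 0) *\<^sub>R picard u t) = exp (- rate * t) * norm (\<phi> 0 + ?I)"
      using False by (simp add: picard_def)
    also have "\<dots> \<le> exp (- rate * t) * (norm (\<phi> 0) + K * t)"
      using \<open>norm ?I \<le> K * (t - 0)\<close> norm_triangle_ineq[of "\<phi> 0" ?I] by (intro mult_left_mono) auto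
    also have "\<dots> = exp (- rate * t) * norm (\<phi> 0) + K * (t * exp (- rate * t))"
      by (simp add: algebra_simps)
    also have "\<dots> \<le> 1 * B + K * (1 / rate)"
      using False rate_pos \<open>0 \<le> K\<close> \<open>norm (\<phi> 0) \<le> B\<close> decay
      by (intro add_mono mult_mono mult_left_mono) auto
    finally show ?thesis by simp
  qed
  then show ?thesis by blast
qed

lemma unweighted_continuous: "continuous_on UNIV (unweighted w)"
  unfolding unweighted_def[abs_def] by (intro continuous_intros continuous_on_apply_bcontfun)

lemma apply_weighted_picard:
  "apply_bcontfun (weighted_picard w) t = exp (- rate * max t 0) *\<^sub>R picard (unweighted w) t"
proof -
  have "(\<lambda>t. exp (- rate * max t 0) *\<^sub>R picard (unweighted w) t) \<in> bcontfun"
    using picard_bounded[OF unweighted_continuous]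
    by (auto simp: bcontfun_def bounded_iff intro!: continuous_intros picard_continuous unweighted_continuous)
  then show ?thesis by (simp add: weighted_picard_def Bcontfun_inverse)
qed

lemma unweighted_dist:
  "norm (unweighted w1 s - unweighted w2 s) \<le> exp (rate * max s 0) * dist w1 w2"
proof -
  have "norm (unweighted w1 s - unweighted w2 s) = exp (rate * max s 0) * dist (w1 s) (w2 s)"
    by (simp add: unweighted_def dist_norm flip: scaleR_diff_right)
  also have "\<dots> \<le> exp (rate * max s 0) * dist w1 w2" by (intro mult_left_mono dist_bounded) auto
  finally show ?thesis .
qed

lemma integrand_dist:
  assumes "0 \<le> r"
  shows "norm (G r (unweighted w1 r) (unweighted w1 (r - \<tau>)) - G r (unweighted w2 r) (unweighted w2 (r - \<tau>)))
    \<le> 2 * L * dist w1 w2 * exp (rate * r)"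
proof -
  have "rate * max (r - \<tau>) 0 \<le> rate * r"
    using assms delay_nonneg rate_pos by (intro mult_left_mono) auto
  then have "exp (rate * max (r - \<tau>) 0) * dist w1 w2 \<le> exp (rate * r) * dist w1 w2"
    by (intro mult_right_mono) auto
  then have delayed: "norm (unweighted w1 (r - \<tau>) - unweighted w2 (r - \<tau>)) \<le> exp (rate * r) * dist w1 w2"
    using unweighted_dist order_trans by blast
  have current: "norm (unweighted w1 r - unweighted w2 r) \<le> exp (rate * r) * dist w1 w2"
    using unweighted_dist[of w1 r w2] assms by simp
  have "norm (G r (unweighted w1 r) (unweighted w1 (r - \<tau>)) - G r (unweighted w2 r) (unweighted w2 (r - \<tau>)))
      \<le> L * (norm (unweighted w1 r - unweighted w2 r) + norm (unweighted w1 (r - \<tau>) - unweighted w2 (r - \<tau>)))"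
    by (rule lipschitz)
  also have "\<dots> \<le> L * (exp (rate * r) * dist w1 w2 + exp (rate * r) * dist w1 w2)"
    by (intro mult_left_mono add_mono current delayed lipschitz_nonneg)
  finally show ?thesis by (simp add: algebra_simps)
qed

lemma weighted_picard_contraction:
  "dist (weighted_picard w1) (weighted_picard w2) \<le> 1/2 * dist w1 w2"
proof (rule dist_bound)
  fix t :: real
  let ?g = "\<lambda>w r. G r (unweighted w r) (unweighted w (r - \<tau>))"
  define c where "c = 2 * L * dist w1 w2"
  show "dist (weighted_picard w1 t) (weighted_picard w2 t) \<le> 1/2 * dist w1 w2"
  proof (cases "t \<le> 0")
    case True
    then show ?thesis by (simp add: apply_weighted_picard picard_def)
  next
    case False
    have int: "?g w integrable_on {0..t}" for w
      by (intro integrable_continuous_interval integrand_continuous unweighted_continuous)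
    have "norm (integral {0..t} (\<lambda>r. ?g w1 r - ?g w2 r)) \<le> integral {0..t} (\<lambda>r. c * exp (rate * r))"
      using integrand_dist
      by (intro integral_norm_bound_integral integrable_diff int integrable_continuous_interval continuous_intros)
        (auto simp: c_def)
    also have "\<dots> = c * ((exp (rate * t) - 1) / rate)"
      using has_integral_exp_scaled[of rate t] rate_pos False
      by (intro integral_unique has_integral_mult_right) auto
    finally have bound: "norm (integral {0..t} (?g w1) - integral {0..t} (?g w2)) \<le> c * ((exp (rate * t) - 1) / rate)"
      by (simp add: integral_diff[OF int int])
    have "dist (weighted_picard w1 t) (weighted_picard w2 t)
        = exp (- rate * t) * norm (integral {0..t} (?g w1) - integral {0..t} (?g w2))"
      using False by (simp add: apply_weighted_picard picard_def dist_norm flip: scaleR_diff_right)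
    also have "\<dots> \<le> exp (- rate * t) * (c * ((exp (rate * t) - 1) / rate))"
      by (intro mult_left_mono bound) auto
    also have "\<dots> = c * (1 - exp (- rate * t)) / rate"
      by (simp add: field_simps exp_minus)
    also have "\<dots> \<le> c / rate"
      using rate_pos lipschitz_nonneg by (intro divide_right_mono mult_left_le) (auto simp: c_def)
    also have "\<dots> \<le> 1/2 * dist w1 w2"
      using rate_pos lipschitz_nonneg by (simp add: c_def rate_def field_simps)
    finally show ?thesis .
  qed
qed

lemma solution_exists:
  "\<exists>u. continuous_on UNIV u \<and> (\<forall>\<theta>\<in>{-\<tau>..0}. u \<theta> = \<phi> \<theta>) \<and>
    (\<forall>t\<ge>0. (u has_vector_derivative G t (u t) (u (t - \<tau>))) (at t within {0..}))"
proof -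
  obtain w where "weighted_picard w = w"
    using banach_fix_type[of "1/2" weighted_picard] weighted_picard_contraction by auto
  define u where "u = unweighted w"
  have u_continuous: "continuous_on UNIV u" unfolding u_def by (rule unweighted_continuous)
  have fixed: "u t = picard u t" for t
  proof -
    have "exp (- (rate * max t 0)) *\<^sub>R picard u t = w t"
      using arg_cong[OF \<open>weighted_picard w = w\<close>, of "\<lambda>w. apply_bcontfun w t"]
      by (simp add: apply_weighted_picard u_def)
    then show ?thesis by (metis u_def unweighted_def exp_minus_inverse scaleR_one scaleR_scaleR)
  qed
  have integral_eq: "u t = \<phi> 0 + integral {0..t} (\<lambda>r. G r (u r) (u (r - \<tau>)))" if "0 \<le> t" for t
    using fixed[of t] that delay_nonneg by (cases "t = 0") (auto simp: picard_def history_def)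
  have "(u has_vector_derivative G t (u t) (u (t - \<tau>))) (at t within {0..})" if "0 \<le> t" for t
  proof -
    have "((\<lambda>s. \<phi> 0 + integral {0..s} (\<lambda>r. G r (u r) (u (r - \<tau>)))) has_vector_derivative
        0 + G t (u t) (u (t - \<tau>))) (at t within {0..})"
      using that by (intro has_vector_derivative_add has_vector_derivative_const
          integral_has_vector_derivative_atLeast integrand_continuous u_continuous) auto
    then have "((\<lambda>s. \<phi> 0 + integral {0..s} (\<lambda>r. G r (u r) (u (r - \<tau>)))) has_vector_derivative
        G t (u t) (u (t - \<tau>))) (at t within {0..})"
      by simp
    then show ?thesis
      by (rule has_vector_derivative_transform_within[OF _ zero_less_one]) (use that integral_eq in auto)
  qed
  moreover have "u \<theta> = \<phi> \<theta>" if "\<theta> \<in> {-\<tau>..0}" for \<theta>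
    using fixed[of \<theta>] that by (simp add: picard_def history_def)
  ultimately show ?thesis using u_continuous by blast
qed

end

text \<open>If \<open>x\<close> and \<open>y\<close> agree up to \<open>a\<close>, the delayed terms on \<open>[a, b]\<close> either agree or lie in the
  window, so the maximum \<open>M\<close> of \<open>\<parallel>x - y\<parallel>\<close> there satisfies \<open>M \<le> 2 L (b - a) M\<close>.\<close>

lemma delay_solutions_agree_step:
  fixes x y :: "real \<Rightarrow> 'a::real_normed_vector"
  assumes "0 \<le> \<tau>" "0 \<le> a" "a \<le> b" "0 \<le> L" "2 * L * (b - a) < 1"
    and continuous: "continuous_on {-\<tau>..} x" "continuous_on {-\<tau>..} y"
    and dx: "\<And>t. 0 \<le> t \<Longrightarrow> (x has_vector_derivative fx t) (at t within {0..})"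
    and dy: "\<And>t. 0 \<le> t \<Longrightarrow> (y has_vector_derivative fy t) (at t within {0..})"
    and lip: "\<And>t. t \<in> {a..b} \<Longrightarrow> norm (fx t - fy t) \<le> L * (norm (x t - y t) + norm (x (t - \<tau>) - y (t - \<tau>)))"
    and agree: "\<And>t. -\<tau> \<le> t \<Longrightarrow> t \<le> a \<Longrightarrow> x t = y t"
    and "-\<tau> \<le> t" "t \<le> b"
  shows "x t = y t"
proof -
  have "{a..b} \<subseteq> {-\<tau>..}" using assms(1,2) by auto
  then have "continuous_on {a..b} (\<lambda>t. norm (x t - y t))"
    using continuous by (intro continuous_intros) (auto intro: continuous_on_subset)
  with \<open>a \<le> b\<close> have "\<exists>m\<in>{a..b}. \<forall>r\<in>{a..b}. norm (x r - y r) \<le> norm (x m - y m)"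
    by (intro continuous_attains_sup) auto
  then obtain m where m: "m \<in> {a..b}"
    and max: "\<And>r. r \<in> {a..b} \<Longrightarrow> norm (x r - y r) \<le> norm (x m - y m)"
    by blast
  define M where "M = norm (x m - y m)"
  have past: "norm (x (r - \<tau>) - y (r - \<tau>)) \<le> M" if "r \<in> {a..b}" for r
    using that agree[of "r - \<tau>"] max[of "r - \<tau>"] \<open>0 \<le> \<tau>\<close> \<open>0 \<le> a\<close>
    by (cases "r - \<tau> \<le> a") (auto simp: M_def)
  have "norm ((x r - y r) - (x a - y a)) \<le> 2 * L * M * (r - a)" if "r \<in> {a..b}" for r
  proof (rule norm_diff_le_of_vector_derivative_bound)
    fix z assume z: "z \<in> {a..r}"
    with that have "z \<in> {a..b}" by auto
    have "{a..r} \<subseteq> {0..}" using \<open>0 \<le> a\<close> by auto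
    then show "((\<lambda>t. x t - y t) has_vector_derivative fx z - fy z) (at z within {a..r})"
      using z \<open>0 \<le> a\<close> by (intro has_vector_derivative_diff has_vector_derivative_within_subset[OF dx]
          has_vector_derivative_within_subset[OF dy]) auto
    have "norm (fx z - fy z) \<le> L * (norm (x z - y z) + norm (x (z - \<tau>) - y (z - \<tau>)))"
      using lip \<open>z \<in> {a..b}\<close> by blast
    also have "\<dots> \<le> L * (M + M)"
      using max past \<open>z \<in> {a..b}\<close> \<open>0 \<le> L\<close> by (intro mult_left_mono add_mono) (auto simp: M_def)
    finally show "norm (fx z - fy z) \<le> 2 * L * M" by (simp add: algebra_simps)
  qed (use that in auto)
  moreover have "x a = y a" using agree \<open>0 \<le> \<tau>\<close> \<open>0 \<le> a\<close> by simp
  ultimately have "M \<le> 2 * L * M * (m - a)" using m by (simp add: M_def)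
  also have "\<dots> \<le> 2 * L * M * (b - a)"
    using m \<open>0 \<le> L\<close> by (intro mult_left_mono) (auto simp: M_def)
  finally have "M * (1 - 2 * L * (b - a)) \<le> 0" by (simp add: algebra_simps)
  then have "M = 0" using \<open>2 * L * (b - a) < 1\<close> by (simp add: mult_le_0_iff M_def)
  then show ?thesis using max[of t] agree[of t] \<open>-\<tau> \<le> t\<close> \<open>t \<le> b\<close> by (cases "t \<le> a") (auto simp: M_def)
qed

lemma delay_solutions_agree_on_windows:
  fixes x y :: "real \<Rightarrow> 'a::real_normed_vector"
  assumes "0 \<le> \<tau>" "0 \<le> L" "0 < h" "2 * L * h < 1"
    and continuous: "continuous_on {-\<tau>..} x" "continuous_on {-\<tau>..} y"
    and dx: "\<And>t. 0 \<le> t \<Longrightarrow> (x has_vector_derivative fx t) (at t within {0..})"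
    and dy: "\<And>t. 0 \<le> t \<Longrightarrow> (y has_vector_derivative fy t) (at t within {0..})"
    and lip: "\<And>t. t \<in> {0..T} \<Longrightarrow> norm (fx t - fy t) \<le> L * (norm (x t - y t) + norm (x (t - \<tau>) - y (t - \<tau>)))"
    and initial: "\<And>\<theta>. \<theta> \<in> {-\<tau>..0} \<Longrightarrow> x \<theta> = y \<theta>"
    and "0 \<le> T" "-\<tau> \<le> t" "t \<le> min T (real n * h)"
  shows "x t = y t"
  using \<open>-\<tau> \<le> t\<close> \<open>t \<le> min T (real n * h)\<close>
proof (induction n arbitrary: t)
  case 0
  then show ?case using initial by simp
next
  case (Suc n)
  let ?a = "min T (real n * h)" and ?b = "min T (real (Suc n) * h)"
  have "0 \<le> ?a" "?a \<le> ?b" "?b - ?a \<le> h" using \<open>0 \<le> T\<close> \<open>0 < h\<close> by (auto simp: min_def algebra_simps)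
  show ?case
  proof (rule delay_solutions_agree_step[where a = ?a and b = ?b, OF \<open>0 \<le> \<tau>\<close> _ _ \<open>0 \<le> L\<close> _ continuous dx dy])
    show "2 * L * (?b - ?a) < 1"
      using \<open>?b - ?a \<le> h\<close> \<open>2 * L * h < 1\<close> mult_left_mono[of _ h "2 * L"] \<open>0 \<le> L\<close> by force
    show "norm (fx r - fy r) \<le> L * (norm (x r - y r) + norm (x (r - \<tau>) - y (r - \<tau>)))" if "r \<in> {?a..?b}" for r
      using that \<open>0 \<le> ?a\<close> by (intro lip) auto
  qed (use Suc \<open>0 \<le> ?a\<close> \<open>?a \<le> ?b\<close> in auto)
qed

lemma delay_solutions_unique:
  fixes x y :: "real \<Rightarrow> 'a::real_normed_vector"
  assumes "0 \<le> \<tau>"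
    and continuous: "continuous_on {-\<tau>..} x" "continuous_on {-\<tau>..} y"
    and dx: "\<And>t. 0 \<le> t \<Longrightarrow> (x has_vector_derivative fx t) (at t within {0..})"
    and dy: "\<And>t. 0 \<le> t \<Longrightarrow> (y has_vector_derivative fy t) (at t within {0..})"
    and locally_lipschitz: "\<And>T. \<exists>L\<ge>0. \<forall>t\<in>{0..T}.
      norm (fx t - fy t) \<le> L * (norm (x t - y t) + norm (x (t - \<tau>) - y (t - \<tau>)))"
    and initial: "\<And>\<theta>. \<theta> \<in> {-\<tau>..0} \<Longrightarrow> x \<theta> = y \<theta>"
    and "-\<tau> \<le> t"
  shows "x t = y t"
proof -
  define T where "T = max t 0"
  obtain L where "0 \<le> L" and lip: "\<And>t. t \<in> {0..T} \<Longrightarrow>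
      norm (fx t - fy t) \<le> L * (norm (x t - y t) + norm (x (t - \<tau>) - y (t - \<tau>)))"
    using locally_lipschitz by blast
  define h where "h = 1 / (2 * L + 1)"
  have "0 < h" "2 * L * h < 1" using \<open>0 \<le> L\<close> by (auto simp: h_def field_simps)
  obtain n where "T / h < real n" using reals_Archimedean2 by blast
  then have "t \<le> min T (real n * h)" using \<open>0 < h\<close> by (simp add: T_def divide_less_eq)
  moreover have "0 \<le> T" by (simp add: T_def)
  ultimately show ?thesis
    using delay_solutions_agree_on_windows[OF assms(1) \<open>0 \<le> L\<close> \<open>0 < h\<close> \<open>2 * L * h < 1\<close> continuous dx dy lip
          initial _ \<open>-\<tau> \<le> t\<close>] by blast
qed

section \<open>The vector-host system\<close>

lemma abs_mult_diff_le:
  fixes a b a' b' :: real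
  assumes "\<bar>a\<bar> \<le> R" "\<bar>b'\<bar> \<le> R" "\<bar>a - a'\<bar> \<le> D" "\<bar>b - b'\<bar> \<le> D"
  shows "\<bar>a * b - a' * b'\<bar> \<le> 2 * R * D"
proof -
  have "\<bar>a * b - a' * b'\<bar> = \<bar>a * (b - b') + b' * (a - a')\<bar>" by (simp add: algebra_simps)
  also have "\<dots> \<le> \<bar>a\<bar> * \<bar>b - b'\<bar> + \<bar>b'\<bar> * \<bar>a - a'\<bar>" by (metis abs_mult abs_triangle_ineq)
  also have "\<dots> \<le> R * D + R * D"
    using assms abs_ge_zero order_trans by (intro add_mono mult_mono) blast+
  also have "\<dots> = 2 * R * D" by simp
  finally show ?thesis .
qed

lemma abs_nonneg_combination_le:
  fixes c m X Y :: real
  assumes "0 \<le> c" "0 \<le> m"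
  shows "\<bar>c * X + m * Y\<bar> \<le> c * \<bar>X\<bar> + m * \<bar>Y\<bar>"
  using assms by (metis abs_mult abs_of_nonneg abs_triangle_ineq)

lemma abs_divide_diff_le:
  fixes a b N n0 :: real
  assumes "0 < n0" "n0 \<le> N"
  shows "\<bar>a / N - b / N\<bar> \<le> \<bar>a - b\<bar> / n0"
proof -
  have "\<bar>a / N - b / N\<bar> = \<bar>a - b\<bar> / N" using assms by (simp add: diff_divide_distrib[symmetric])
  also have "\<dots> \<le> \<bar>a - b\<bar> / n0" using assms by (intro divide_left_mono) auto
  finally show ?thesis .
qed

definition box_clamp :: "real^'n \<Rightarrow> real^'n \<Rightarrow> real^'n" where
  "box_clamp M z = (\<chi> i. max 0 (min (M $ i) (z $ i)))"

lemma box_clamp_nonneg: "0 \<le> box_clamp M z $ i"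
  by (simp add: box_clamp_def)

lemma box_clamp_le: "0 \<le> M $ i \<Longrightarrow> box_clamp M z $ i \<le> M $ i"
  by (simp add: box_clamp_def)

lemma box_clamp_below: "z $ i < 0 \<Longrightarrow> box_clamp M z $ i = 0"
  by (simp add: box_clamp_def)

lemma box_clamp_above: "0 \<le> M $ i \<Longrightarrow> M $ i < z $ i \<Longrightarrow> box_clamp M z $ i = M $ i"
  by (simp add: box_clamp_def)

lemma box_clamp_id: "0 \<le> z \<Longrightarrow> z \<le> M \<Longrightarrow> box_clamp M z = z"
  by (simp add: box_clamp_def vec_eq_iff less_eq_vec_def)

lemma box_clamp_dist: "norm (box_clamp M z - box_clamp M z') \<le> norm (z - z')"
  by (rule norm_le_componentwise_cart) (auto simp: box_clamp_def max_def min_def)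

lemma norm_box_clamp_le: "0 \<le> M \<Longrightarrow> norm (box_clamp M z) \<le> norm M"
  by (rule norm_le_componentwise_cart) (auto simp: box_clamp_def less_eq_vec_def max_def min_def)

lemma continuous_on_box_clamp [continuous_intros]:
  "continuous_on S f \<Longrightarrow> continuous_on S (\<lambda>x. box_clamp M (f x))"
  unfolding box_clamp_def by (intro continuous_intros)

locale vector_host_system =
  fixes \<beta>h \<beta>v \<mu>h \<mu>v Cvh Chv \<tau> :: real
  assumes \<beta>h_pos: "0 < \<beta>h" and \<beta>v_pos: "0 < \<beta>v" and \<mu>h_pos: "0 < \<mu>h" and \<mu>v_pos: "0 < \<mu>v"
    and Cvh_pos: "0 < Cvh" and Chv_pos: "0 < Chv" and delay_nonneg: "0 \<le> \<tau>"
begin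

abbreviation solution :: "(real \<Rightarrow> real^4) \<Rightarrow> (real \<Rightarrow> real^4) \<Rightarrow> bool" where
  "solution \<phi> x \<equiv> is_solution \<beta>h \<beta>v \<mu>h \<mu>v Cvh Chv \<tau> \<phi> x"

definition rhs_with_fractions :: "real \<Rightarrow> real \<Rightarrow> real^4 \<Rightarrow> real^4 \<Rightarrow> real^4" where
  "rhs_with_fractions r rd z w =
     (\<chi> i. if i = 1 then \<beta>h - Cvh * r * z $ 1 - \<mu>h * z $ 1
           else if i = 2 then Cvh * rd * w $ 1 - \<mu>h * z $ 2
           else if i = 3 then \<beta>v - Chv * z $ 2 * z $ 3 - \<mu>v * z $ 3
           else Chv * z $ 2 * z $ 3 - \<mu>v * z $ 4)"

lemma rhs_with_fractions_nth [simp]: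
  "rhs_with_fractions r rd z w $ 1 = \<beta>h - Cvh * r * z $ 1 - \<mu>h * z $ 1"
  "rhs_with_fractions r rd z w $ 2 = Cvh * rd * w $ 1 - \<mu>h * z $ 2"
  "rhs_with_fractions r rd z w $ 3 = \<beta>v - Chv * z $ 2 * z $ 3 - \<mu>v * z $ 3"
  "rhs_with_fractions r rd z w $ 4 = Chv * z $ 2 * z $ 3 - \<mu>v * z $ 4"
  by (simp_all add: rhs_with_fractions_def)

lemma rhs_eq_rhs_with_fractions:
  "rhs \<beta>h \<beta>v \<mu>h \<mu>v Cvh Chv z w = rhs_with_fractions (z $ 4 / (z $ 3 + z $ 4)) (w $ 4 / (w $ 3 + w $ 4)) z w"
  by (simp add: rhs_def rhs_with_fractions_def)

lemma rhs_with_fractions_vector_total: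
  "rhs_with_fractions r rd z w $ 3 + rhs_with_fractions r rd z w $ 4 = \<beta>v - \<mu>v * (z $ 3 + z $ 4)"
  by (simp add: algebra_simps)

lemma rhs_with_fractions_diff_nth:
  "(rhs_with_fractions r rd z w - rhs_with_fractions r' rd' z' w') $ 1
     = Cvh * (r' * z' $ 1 - r * z $ 1) + \<mu>h * (z' $ 1 - z $ 1)"
  "(rhs_with_fractions r rd z w - rhs_with_fractions r' rd' z' w') $ 2
     = Cvh * (rd * w $ 1 - rd' * w' $ 1) + \<mu>h * (z' $ 2 - z $ 2)"
  "(rhs_with_fractions r rd z w - rhs_with_fractions r' rd' z' w') $ 3
     = Chv * (z' $ 2 * z' $ 3 - z $ 2 * z $ 3) + \<mu>v * (z' $ 3 - z $ 3)"
  "(rhs_with_fractions r rd z w - rhs_with_fractions r' rd' z' w') $ 4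
     = Chv * (z $ 2 * z $ 3 - z' $ 2 * z' $ 3) + \<mu>v * (z' $ 4 - z $ 4)"
  by (simp_all add: algebra_simps)

lemma rhs_with_fractions_lipschitz:
  assumes "\<bar>r\<bar> \<le> R" "\<bar>r'\<bar> \<le> R" "\<bar>rd\<bar> \<le> R" "\<bar>rd'\<bar> \<le> R"
    and "norm z \<le> R" "norm z' \<le> R" "norm w \<le> R" "norm w' \<le> R"
  shows "norm (rhs_with_fractions r rd z w - rhs_with_fractions r' rd' z' w')
    \<le> 4 * (2 * (Cvh + Chv) * R + \<mu>h + \<mu>v) *
      (\<bar>r - r'\<bar> + \<bar>rd - rd'\<bar> + norm (z - z') + norm (w - w'))"
proof -
  define D where "D = \<bar>r - r'\<bar> + \<bar>rd - rd'\<bar> + norm (z - z') + norm (w - w')"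
  define K where "K = 2 * (Cvh + Chv) * R + \<mu>h + \<mu>v"
  have "0 \<le> R" "0 \<le> D" using assms(1) by (auto simp: D_def)
  have "\<bar>z $ i - z' $ i\<bar> \<le> D" "\<bar>w $ i - w' $ i\<bar> \<le> D" for i
    using component_le_norm_cart[of "z - z'" i] component_le_norm_cart[of "w - w'" i] by (auto simp: D_def)
  moreover have "\<bar>r - r'\<bar> \<le> D" "\<bar>rd - rd'\<bar> \<le> D" by (auto simp: D_def)
  ultimately have close: "\<bar>z $ i - z' $ i\<bar> \<le> D" "\<bar>z' $ i - z $ i\<bar> \<le> D" "\<bar>w $ i - w' $ i\<bar> \<le> D"
    "\<bar>r' - r\<bar> \<le> D" "\<bar>rd - rd'\<bar> \<le> D" for i
    by (auto simp: abs_minus_commute)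
  have bounded: "\<bar>z $ i\<bar> \<le> R" "\<bar>z' $ i\<bar> \<le> R" "\<bar>w' $ i\<bar> \<le> R" for i
    using assms component_le_norm_cart order_trans by metis+
  have combination: "\<bar>c * X + m * Y\<bar> \<le> K * D"
    if "0 \<le> c" "0 \<le> m" "c \<le> Cvh + Chv" "m \<le> \<mu>h + \<mu>v" "\<bar>X\<bar> \<le> 2 * R * D" "\<bar>Y\<bar> \<le> D" for c m X Y
  proof -
    have "\<bar>c * X + m * Y\<bar> \<le> c * \<bar>X\<bar> + m * \<bar>Y\<bar>" using that(1,2) by (rule abs_nonneg_combination_le)
    also have "\<dots> \<le> (Cvh + Chv) * (2 * R * D) + (\<mu>h + \<mu>v) * D"
      using that \<open>0 \<le> R\<close> \<open>0 \<le> D\<close> by (intro add_mono mult_mono) auto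
    finally show ?thesis by (simp add: K_def algebra_simps)
  qed
  have coefficients: "0 \<le> Cvh" "0 \<le> Chv" "0 \<le> \<mu>h" "0 \<le> \<mu>v" "Cvh \<le> Cvh + Chv" "Chv \<le> Cvh + Chv"
    "\<mu>h \<le> \<mu>h + \<mu>v" "\<mu>v \<le> \<mu>h + \<mu>v"
    using Cvh_pos Chv_pos \<mu>h_pos \<mu>v_pos by auto
  have "\<bar>(rhs_with_fractions r rd z w - rhs_with_fractions r' rd' z' w') $ i\<bar> \<le> K * D" for i
  proof -
    consider "i = 1" | "i = 2" | "i = 3" | "i = 4" using exhaust_4 by blast
    then show ?thesis
      by cases (simp_all only: rhs_with_fractions_diff_nth;
          intro combination abs_mult_diff_le coefficients close bounded assms(2,3))+
  qed
  then have "norm (rhs_with_fractions r rd z w - rhs_with_fractions r' rd' z' w') \<le> (\<Sum>i\<in>(UNIV :: 4 set). K * D)"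
    by (intro order_trans[OF norm_le_l1_cart] sum_mono)
  also have "\<dots> = 4 * K * D" by simp
  finally show ?thesis unfolding K_def D_def .
qed

lemma continuous_on_rhs_with_fractions [continuous_intros]:
  assumes "continuous_on S r" "continuous_on S rd" "continuous_on S z" "continuous_on S w"
  shows "continuous_on S (\<lambda>s. rhs_with_fractions (r s) (rd s) (z s) (w s))"
  unfolding rhs_with_fractions_def
proof (rule continuous_on_vec_lambda)
  fix i :: 4
  show "continuous_on S (\<lambda>s. if i = 1 then \<beta>h - Cvh * r s * z s $ 1 - \<mu>h * z s $ 1
      else if i = 2 then Cvh * rd s * w s $ 1 - \<mu>h * z s $ 2
      else if i = 3 then \<beta>v - Chv * z s $ 2 * z s $ 3 - \<mu>v * z s $ 3
      else Chv * z s $ 2 * z s $ 3 - \<mu>v * z s $ 4)"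
    using exhaust_4[of i] by (elim disjE; simp; intro continuous_intros assms)
qed

text \<open>\<open>N\<^sub>v = S\<^sub>v + I\<^sub>v\<close> obeys the closed equation \<open>N\<^sub>v' = \<beta>\<^sub>v - \<mu>\<^sub>v N\<^sub>v\<close>, so it is known explicitly.\<close>

definition vector_population :: "(real \<Rightarrow> real^4) \<Rightarrow> real \<Rightarrow> real" where
  "vector_population \<phi> t = (if t \<le> 0 then \<phi> (max (-\<tau>) t) $ 3 + \<phi> (max (-\<tau>) t) $ 4
     else \<beta>v/\<mu>v + (\<phi> 0 $ 3 + \<phi> 0 $ 4 - \<beta>v/\<mu>v) * exp (- \<mu>v * t))"

lemma vector_population_continuous:
  assumes "continuous_on {-\<tau>..0} \<phi>"
  shows "continuous_on UNIV (vector_population \<phi>)"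
proof -
  have "continuous_on {t. t \<le> 0} (\<lambda>t. \<phi> (max (-\<tau>) t))"
    by (rule continuous_on_compose2[OF assms]) (auto intro!: continuous_intros simp: delay_nonneg)
  then have "continuous_on {t. t \<le> 0} (\<lambda>t. \<phi> (max (-\<tau>) t) $ 3 + \<phi> (max (-\<tau>) t) $ 4)"
    by (intro continuous_intros)
  moreover have "continuous_on {t. 0 \<le> t} (\<lambda>t. \<beta>v/\<mu>v + (\<phi> 0 $ 3 + \<phi> 0 $ 4 - \<beta>v/\<mu>v) * exp (- \<mu>v * t))"
    by (intro continuous_intros)
  ultimately show ?thesis unfolding vector_population_def[abs_def]
    by (intro continuous_on_cases_le[where h="\<lambda>t. t" and a=0, simplified])
      (auto simp: delay_nonneg max_def)
qed

lemma vector_population_pos: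
  assumes "in_Cplus \<tau> \<phi>"
  shows "\<exists>n0>0. \<forall>t. n0 \<le> vector_population \<phi> t"
proof -
  have "continuous_on {-\<tau>..0} (\<lambda>\<theta>. \<phi> \<theta> $ 3 + \<phi> \<theta> $ 4)"
    using assms by (auto intro!: continuous_intros simp: in_Cplus_def)
  with delay_nonneg have "\<exists>m\<in>{-\<tau>..0}. \<forall>\<theta>\<in>{-\<tau>..0}. \<phi> m $ 3 + \<phi> m $ 4 \<le> \<phi> \<theta> $ 3 + \<phi> \<theta> $ 4"
    by (intro continuous_attains_inf) auto
  then obtain m where m: "m \<in> {-\<tau>..0}"
    and min: "\<And>\<theta>. \<theta> \<in> {-\<tau>..0} \<Longrightarrow> \<phi> m $ 3 + \<phi> m $ 4 \<le> \<phi> \<theta> $ 3 + \<phi> \<theta> $ 4"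
    by blast
  define n0 where "n0 = min (\<phi> m $ 3 + \<phi> m $ 4) (\<beta>v/\<mu>v)"
  have "0 < n0" using assms m \<beta>v_pos \<mu>v_pos by (simp add: n0_def in_Cplus_def)
  moreover have "n0 \<le> vector_population \<phi> t" for t
  proof (cases "t \<le> 0")
    case True
    then have "max (-\<tau>) t \<in> {-\<tau>..0}" using delay_nonneg by auto
    then show ?thesis using min True by (simp add: vector_population_def n0_def min.coboundedI1)
  next
    case False
    define e where "e = exp (- \<mu>v * t)"
    define N0 where "N0 = \<phi> 0 $ 3 + \<phi> 0 $ 4"
    have "0 \<le> e" "e \<le> 1" using False \<mu>v_pos by (auto simp: e_def)
    have "n0 \<le> N0" "n0 \<le> \<beta>v/\<mu>v" using min[of 0] delay_nonneg by (auto simp: n0_def N0_def)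
    then have "(1 - e) * n0 + e * n0 \<le> (1 - e) * (\<beta>v/\<mu>v) + e * N0"
      using \<open>0 \<le> e\<close> \<open>e \<le> 1\<close> by (intro add_mono mult_left_mono) auto
    moreover have "vector_population \<phi> t = \<beta>v/\<mu>v + (N0 - \<beta>v/\<mu>v) * e"
      using False by (simp add: vector_population_def e_def N0_def)
    moreover have "(1 - e) * (\<beta>v/\<mu>v) + e * N0 = \<beta>v/\<mu>v + (N0 - \<beta>v/\<mu>v) * e"
      "(1 - e) * n0 + e * n0 = n0"
      by (simp_all add: algebra_simps add_divide_distrib[symmetric])
    ultimately show ?thesis by linarith
  qed
  ultimately show ?thesis by blast
qed

lemma vector_population_eq:
  assumes initial: "\<And>\<theta>. \<theta> \<in> {-\<tau>..0} \<Longrightarrow> x \<theta> = \<phi> \<theta>"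
    and deriv: "\<And>t. 0 \<le> t \<Longrightarrow>
      ((\<lambda>s. x s $ 3 + x s $ 4) has_real_derivative \<beta>v - \<mu>v * (x t $ 3 + x t $ 4)) (at t within {0..})"
    and "-\<tau> \<le> t"
  shows "x t $ 3 + x t $ 4 = vector_population \<phi> t"
proof (cases "t \<le> 0")
  case True
  then show ?thesis using initial[of t] \<open>-\<tau> \<le> t\<close> by (simp add: vector_population_def max_def)
next
  case False
  have "x t $ 3 + x t $ 4 = \<beta>v/\<mu>v + (x 0 $ 3 + x 0 $ 4 - \<beta>v/\<mu>v) * exp (- \<mu>v * t)"
    using linear_decay_ODE_explicit[of "\<mu>v" "\<lambda>s. x s $ 3 + x s $ 4" "\<beta>v" t] \<mu>v_pos deriv False
    by simp
  then show ?thesis using initial[of 0] delay_nonneg False by (simp add: vector_population_def)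
qed

lemma solution_vector_population:
  assumes "solution \<phi> x" "-\<tau> \<le> t"
  shows "x t $ 3 + x t $ 4 = vector_population \<phi> t"
proof (rule vector_population_eq)
  fix s :: real assume "0 \<le> s"
  let ?F = "rhs \<beta>h \<beta>v \<mu>h \<mu>v Cvh Chv (x s) (x (s - \<tau>))"
  have "(x has_vector_derivative ?F) (at s within {0..})"
    using assms(1) \<open>0 \<le> s\<close> by (simp add: is_solution_def)
  then have "((\<lambda>s. x s $ 3 + x s $ 4) has_real_derivative ?F $ 3 + ?F $ 4) (at s within {0..})"
    by (intro DERIV_add has_vector_derivative_nth)
  then show "((\<lambda>s. x s $ 3 + x s $ 4) has_real_derivative \<beta>v - \<mu>v * (x s $ 3 + x s $ 4)) (at s within {0..})"
    by (simp only: rhs_eq_rhs_with_fractions rhs_with_fractions_vector_total)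
qed (use assms in \<open>auto simp: is_solution_def\<close>)

lemma rhs_lipschitz_at_equal_populations:
  assumes "0 < n0" "n0 \<le> N" "n0 \<le> Nd" "0 \<le> R"
    and "z $ 3 + z $ 4 = N" "z' $ 3 + z' $ 4 = N" "w $ 3 + w $ 4 = Nd" "w' $ 3 + w' $ 4 = Nd"
    and "norm z \<le> R" "norm z' \<le> R" "norm w \<le> R" "norm w' \<le> R"
  shows "norm (rhs \<beta>h \<beta>v \<mu>h \<mu>v Cvh Chv z w - rhs \<beta>h \<beta>v \<mu>h \<mu>v Cvh Chv z' w')
    \<le> 4 * (2 * (Cvh + Chv) * (R + R / n0) + \<mu>h + \<mu>v) * (1 + 1 / n0) * (norm (z - z') + norm (w - w'))"
proof -
  define K where "K = 4 * (2 * (Cvh + Chv) * (R + R / n0) + \<mu>h + \<mu>v)"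
  have "0 \<le> K" using assms(1,4) Cvh_pos Chv_pos \<mu>h_pos \<mu>v_pos by (simp add: K_def)
  have fraction_bound: "\<bar>v $ 4 / D\<bar> \<le> R + R / n0" if "norm v \<le> R" "n0 \<le> D" for v D
  proof -
    have "\<bar>v $ 4 / D\<bar> \<le> \<bar>v $ 4\<bar> / n0"
      using \<open>0 < n0\<close> that(2) by (simp add: abs_divide frac_le)
    also have "\<dots> \<le> R / n0"
      using \<open>0 < n0\<close> component_le_norm_cart[of v 4] that(1) by (simp add: divide_right_mono)
    finally show ?thesis using \<open>0 \<le> R\<close> by linarith
  qed
  have fraction_diff: "\<bar>v $ 4 / D - v' $ 4 / D\<bar> \<le> norm (v - v') / n0" if "n0 \<le> D" for v v' D
  proof -
    have "\<bar>v $ 4 / D - v' $ 4 / D\<bar> \<le> \<bar>v $ 4 - v' $ 4\<bar> / n0" using \<open>0 < n0\<close> that by (rule abs_divide_diff_le)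
    also have "\<dots> \<le> norm (v - v') / n0"
      using component_le_norm_cart[of "v - v'" 4] \<open>0 < n0\<close> by (simp add: divide_right_mono)
    finally show ?thesis .
  qed
  have "R \<le> R + R / n0" using assms(1,4) by simp
  then have "norm (rhs \<beta>h \<beta>v \<mu>h \<mu>v Cvh Chv z w - rhs \<beta>h \<beta>v \<mu>h \<mu>v Cvh Chv z' w')
      \<le> K * (\<bar>z $ 4 / N - z' $ 4 / N\<bar> + \<bar>w $ 4 / Nd - w' $ 4 / Nd\<bar> + norm (z - z') + norm (w - w'))"
    unfolding rhs_eq_rhs_with_fractions assms(5-8) K_def using assms(2,3,9-12)
    by (intro rhs_with_fractions_lipschitz fraction_bound) (auto intro: order_trans)
  also have "\<dots> \<le> K * (norm (z - z') / n0 + norm (w - w') / n0 + norm (z - z') + norm (w - w'))"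
    using \<open>0 \<le> K\<close> assms(2,3) by (intro mult_left_mono add_mono fraction_diff order_refl)
  also have "\<dots> = K * (1 + 1 / n0) * (norm (z - z') + norm (w - w'))"
    by (simp add: divide_inverse algebra_simps)
  finally show ?thesis unfolding K_def .
qed

lemma rhs_lipschitz_along_solutions:
  assumes "in_Cplus \<tau> \<phi>" "solution \<phi> x" "solution \<phi> y"
  shows "\<exists>L\<ge>0. \<forall>t\<in>{0..T}. norm (rhs \<beta>h \<beta>v \<mu>h \<mu>v Cvh Chv (x t) (x (t - \<tau>)) - rhs \<beta>h \<beta>v \<mu>h \<mu>v Cvh Chv (y t) (y (t - \<tau>)))
     \<le> L * (norm (x t - y t) + norm (x (t - \<tau>) - y (t - \<tau>)))"
proof -
  obtain n0 where "0 < n0" and n0: "\<And>t. n0 \<le> vector_population \<phi> t"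
    using vector_population_pos[OF assms(1)] by blast
  have "continuous_on {-\<tau>..T} x" "continuous_on {-\<tau>..T} y"
    using assms(2,3) by (auto simp: is_solution_def intro: continuous_on_subset)
  then obtain Rx Ry where "\<And>s. s \<in> {-\<tau>..T} \<Longrightarrow> norm (x s) \<le> Rx"
    and "\<And>s. s \<in> {-\<tau>..T} \<Longrightarrow> norm (y s) \<le> Ry"
    using continuous_on_Icc_norm_bound by metis
  then have R: "norm (x s) \<le> max 0 (max Rx Ry)" "norm (y s) \<le> max 0 (max Rx Ry)" if "s \<in> {-\<tau>..T}" for s
    using that by (auto simp: le_max_iff_disj)
  define L where "L = 4 * (2 * (Cvh + Chv) * (max 0 (max Rx Ry) + max 0 (max Rx Ry) / n0) + \<mu>h + \<mu>v) * (1 + 1 / n0)"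
  have "0 \<le> L" using \<open>0 < n0\<close> Cvh_pos Chv_pos \<mu>h_pos \<mu>v_pos by (simp add: L_def)
  moreover have "norm (rhs \<beta>h \<beta>v \<mu>h \<mu>v Cvh Chv (x t) (x (t - \<tau>)) - rhs \<beta>h \<beta>v \<mu>h \<mu>v Cvh Chv (y t) (y (t - \<tau>)))
     \<le> L * (norm (x t - y t) + norm (x (t - \<tau>) - y (t - \<tau>)))" if "t \<in> {0..T}" for t
    unfolding L_def using that delay_nonneg
    by (intro rhs_lipschitz_at_equal_populations[OF \<open>0 < n0\<close> n0[of t] n0[of "t - \<tau>"]] R
        solution_vector_population[OF assms(2)] solution_vector_population[OF assms(3)]) auto
  ultimately show ?thesis by blast
qed

lemma solution_unique:
  assumes "in_Cplus \<tau> \<phi>" "solution \<phi> x" "solution \<phi> y" "-\<tau> \<le> t"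
  shows "x t = y t"
  using assms(2,3)
  by (intro delay_solutions_unique[OF delay_nonneg _ _ _ _ rhs_lipschitz_along_solutions[OF assms(1-3)] _ assms(4)])
    (auto simp: is_solution_def)

end

text \<open>An a priori box \<open>{0..M}\<close> for the solution: each cap makes the corresponding face of the box
  repelling, given the caps of the components that feed into it.\<close>

locale vector_host_truncation = vector_host_system +
  fixes \<phi> :: "real \<Rightarrow> real^4" and M :: "real^4"
  assumes initial: "in_Cplus \<tau> \<phi>"
    and initial_le: "\<And>\<theta>. \<theta> \<in> {-\<tau>..0} \<Longrightarrow> \<phi> \<theta> \<le> M"
    and cap_1: "\<beta>h \<le> \<mu>h * M $ 1" and cap_2: "Cvh * M $ 1 \<le> \<mu>h * M $ 2"
    and cap_3: "\<beta>v \<le> \<mu>v * M $ 3" and cap_4: "Chv * M $ 2 * M $ 3 \<le> \<mu>v * M $ 4"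
begin

text \<open>Outside the box the right-hand side is evaluated at the nearest point of the box, and the
  infected vector fraction uses the known \<open>N\<^sub>v\<close> and is capped at 1. The result is globally Lipschitz
  and bounded, and agrees with the true right-hand side along solutions that stay in the box.\<close>

definition fraction :: "real \<Rightarrow> real^4 \<Rightarrow> real" where
  "fraction t z = min 1 (z $ 4 / vector_population \<phi> t)"

definition truncated_rhs :: "real \<Rightarrow> real^4 \<Rightarrow> real^4 \<Rightarrow> real^4" where
  "truncated_rhs t z w = rhs_with_fractions (fraction t (box_clamp M z)) (fraction (t - \<tau>) (box_clamp M w))
     (box_clamp M z) (box_clamp M w)"

definition truncated_solution :: "(real \<Rightarrow> real^4) \<Rightarrow> bool" where
  "truncated_solution u \<longleftrightarrow> continuous_on UNIV u \<and> (\<forall>\<theta>\<in>{-\<tau>..0}. u \<theta> = \<phi> \<theta>) \<and>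
     (\<forall>t\<ge>0. (u has_vector_derivative truncated_rhs t (u t) (u (t - \<tau>))) (at t within {0..}))"

lemma initial_nonneg: "\<theta> \<in> {-\<tau>..0} \<Longrightarrow> 0 \<le> \<phi> \<theta>"
  using initial by (simp add: in_Cplus_def less_eq_vec_def)

lemma cap_nonneg: "0 \<le> M"
  using initial_nonneg[of 0] initial_le[of 0] delay_nonneg by auto

lemma population_pos: "0 < vector_population \<phi> t"
  using vector_population_pos[OF initial] by (meson less_le_trans)

lemma continuous_on_population [continuous_intros]:
  "continuous_on S f \<Longrightarrow> continuous_on S (\<lambda>s. vector_population \<phi> (f s))"
  using initial unfolding in_Cplus_def
  by (metis continuous_on_compose2 vector_population_continuous subset_UNIV)

lemma fraction_bounds:
  assumes "0 \<le> z $ 4"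
  shows "0 \<le> fraction t z" "fraction t z \<le> 1"
  using assms population_pos[of t] by (auto simp: fraction_def)

lemma fraction_lipschitz:
  assumes "0 < n0" "\<And>t. n0 \<le> vector_population \<phi> t"
  shows "\<bar>fraction t z - fraction t z'\<bar> \<le> norm (z - z') / n0"
proof -
  have "\<bar>fraction t z - fraction t z'\<bar> \<le> \<bar>z $ 4 / vector_population \<phi> t - z' $ 4 / vector_population \<phi> t\<bar>"
    by (simp add: fraction_def min_def)
  also have "\<dots> \<le> \<bar>z $ 4 - z' $ 4\<bar> / n0" using assms by (rule abs_divide_diff_le)
  also have "\<dots> \<le> norm (z - z') / n0"
    using component_le_norm_cart[of "z - z'" 4] assms(1) by (simp add: divide_right_mono)
  finally show ?thesis .
qed

lemma fraction_clamp_bounds: "0 \<le> fraction t (box_clamp M z)" "fraction t (box_clamp M z) \<le> 1"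
  using fraction_bounds box_clamp_nonneg by blast+

lemma truncated_arguments_bounded:
  "\<bar>fraction t (box_clamp M z)\<bar> \<le> max 1 (norm M)" "norm (box_clamp M z) \<le> max 1 (norm M)"
  using fraction_clamp_bounds[of t z] norm_box_clamp_le[OF cap_nonneg, of z] by auto

lemma truncated_rhs_lipschitz:
  "\<exists>L\<ge>0. \<forall>t z w z' w'. norm (truncated_rhs t z w - truncated_rhs t z' w') \<le> L * (norm (z - z') + norm (w - w'))"
proof -
  obtain n0 where "0 < n0" and n0: "\<And>t. n0 \<le> vector_population \<phi> t"
    using vector_population_pos[OF initial] by blast
  define C where "C = 4 * (2 * (Cvh + Chv) * max 1 (norm M) + \<mu>h + \<mu>v)"
  have "0 \<le> C" using Cvh_pos Chv_pos \<mu>h_pos \<mu>v_pos by (simp add: C_def)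
  have "norm (truncated_rhs t z w - truncated_rhs t z' w') \<le> C * (1 + 1 / n0) * (norm (z - z') + norm (w - w'))"
    for t z w z' w'
  proof -
    let ?dz = "norm (box_clamp M z - box_clamp M z')" and ?dw = "norm (box_clamp M w - box_clamp M w')"
    have "norm (truncated_rhs t z w - truncated_rhs t z' w')
      \<le> C * (\<bar>fraction t (box_clamp M z) - fraction t (box_clamp M z')\<bar>
          + \<bar>fraction (t - \<tau>) (box_clamp M w) - fraction (t - \<tau>) (box_clamp M w')\<bar> + ?dz + ?dw)"
      unfolding truncated_rhs_def C_def by (intro rhs_with_fractions_lipschitz truncated_arguments_bounded)
    also have "\<dots> \<le> C * (?dz / n0 + ?dw / n0 + ?dz + ?dw)"
      using \<open>0 \<le> C\<close> fraction_lipschitz[OF \<open>0 < n0\<close> n0] by (intro mult_left_mono add_mono order_refl)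
    also have "\<dots> \<le> C * (norm (z - z') / n0 + norm (w - w') / n0 + norm (z - z') + norm (w - w'))"
      using \<open>0 \<le> C\<close> \<open>0 < n0\<close> box_clamp_dist
      by (intro mult_left_mono add_mono divide_right_mono) auto
    also have "\<dots> = C * (1 + 1 / n0) * (norm (z - z') + norm (w - w'))"
      by (simp add: divide_inverse algebra_simps)
    finally show ?thesis .
  qed
  moreover have "0 \<le> C * (1 + 1 / n0)" using \<open>0 \<le> C\<close> \<open>0 < n0\<close> by simp
  ultimately show ?thesis by blast
qed

lemma truncated_rhs_bounded: "\<exists>K. \<forall>t z w. norm (truncated_rhs t z w) \<le> K"
proof -
  define R where "R = max 1 (norm M)"
  define C where "C = 4 * (2 * (Cvh + Chv) * R + \<mu>h + \<mu>v)"
  define F0 where "F0 = rhs_with_fractions 0 0 0 0"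
  have "0 \<le> C" "0 \<le> R" using Cvh_pos Chv_pos \<mu>h_pos \<mu>v_pos by (auto simp: C_def R_def)
  note bounds = truncated_arguments_bounded[folded R_def]
  have "norm (truncated_rhs t z w) \<le> norm F0 + C * (4 * R)" for t z w
  proof -
    have "norm (truncated_rhs t z w - F0)
      \<le> C * (\<bar>fraction t (box_clamp M z) - 0\<bar> + \<bar>fraction (t - \<tau>) (box_clamp M w) - 0\<bar>
          + norm (box_clamp M z - 0) + norm (box_clamp M w - 0))"
      unfolding truncated_rhs_def C_def F0_def using \<open>0 \<le> R\<close> by (intro rhs_with_fractions_lipschitz bounds) auto
    also have "\<dots> \<le> C * (4 * R)"
      using bounds(1)[of t z] bounds(1)[of "t - \<tau>" w] bounds(2)[of z] bounds(2)[of w] \<open>0 \<le> C\<close>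
      by (intro mult_left_mono) auto
    finally show ?thesis using norm_triangle_sub[of "truncated_rhs t z w" F0] by linarith
  qed
  then show ?thesis by blast
qed

lemma truncated_rhs_continuous:
  assumes "continuous_on UNIV u"
  shows "continuous_on UNIV (\<lambda>r. truncated_rhs r (u r) (u (r - \<tau>)))"
proof -
  have "continuous_on UNIV (\<lambda>r. u (r - \<tau>))"
    by (rule continuous_on_compose2[OF assms]) (auto intro: continuous_intros)
  then show ?thesis
    unfolding truncated_rhs_def fraction_def using assms population_pos
    by (intro continuous_intros) (auto simp: less_imp_neq[symmetric])
qed

lemma truncated_rhs_nonneg_below:
  assumes "z $ i < 0"
  shows "0 \<le> truncated_rhs t z w $ i"
proof -
  have "box_clamp M z $ i = 0" using assms by (rule box_clamp_below)
  moreover note box_clamp_nonneg fraction_clamp_bounds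
  ultimately show ?thesis
    using exhaust_4[of i] \<beta>h_pos \<beta>v_pos Cvh_pos Chv_pos
    by (auto simp: truncated_rhs_def intro!: mult_nonneg_nonneg)
qed

lemma truncated_rhs_nonpos_above:
  assumes "M $ i < z $ i"
  shows "truncated_rhs t z w $ i \<le> 0"
proof -
  have clamp: "box_clamp M z $ i = M $ i" using cap_nonneg assms by (intro box_clamp_above) (auto simp: less_eq_vec_def)
  have M_nonneg: "0 \<le> M $ j" for j using cap_nonneg by (simp add: less_eq_vec_def)
  then have le: "box_clamp M v $ j \<le> M $ j" "0 \<le> box_clamp M v $ j" for v j
    using box_clamp_le box_clamp_nonneg by blast+
  have fr: "0 \<le> fraction s (box_clamp M v)" "fraction s (box_clamp M v) \<le> 1" for s v
    using fraction_clamp_bounds by blast+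
  consider "i = 1" | "i = 2" | "i = 3" | "i = 4" using exhaust_4 by blast
  then show ?thesis
  proof cases
    case 1
    have "0 \<le> Cvh * fraction t (box_clamp M z) * M $ 1" using Cvh_pos fr le(2)[of z 1] clamp 1 by simp
    then show ?thesis using 1 clamp cap_1 by (simp add: truncated_rhs_def)
  next
    case 2
    have "fraction (t - \<tau>) (box_clamp M w) * box_clamp M w $ 1 \<le> 1 * M $ 1"
      using fr le by (intro mult_mono) auto
    then have "Cvh * fraction (t - \<tau>) (box_clamp M w) * box_clamp M w $ 1 \<le> Cvh * M $ 1"
      using Cvh_pos by (simp add: mult.assoc)
    then show ?thesis using 2 clamp cap_2 by (simp add: truncated_rhs_def)
  next
    case 3
    have "0 \<le> Chv * box_clamp M z $ 2 * M $ 3" using Chv_pos le(2)[of z 2] le(2)[of z 3] clamp 3 by simp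
    then show ?thesis using 3 clamp cap_3 by (simp add: truncated_rhs_def)
  next
    case 4
    have "box_clamp M z $ 2 * box_clamp M z $ 3 \<le> M $ 2 * M $ 3" using le M_nonneg by (intro mult_mono) auto
    then have "Chv * box_clamp M z $ 2 * box_clamp M z $ 3 \<le> Chv * M $ 2 * M $ 3"
      using Chv_pos by (simp add: mult.assoc)
    then show ?thesis using 4 clamp cap_4 by (simp add: truncated_rhs_def)
  qed
qed

lemma truncated_solution_exists: "\<exists>u. truncated_solution u"
proof -
  obtain L where "0 \<le> L"
    and L: "\<And>t z w z' w'. norm (truncated_rhs t z w - truncated_rhs t z' w') \<le> L * (norm (z - z') + norm (w - w'))"
    using truncated_rhs_lipschitz by blast
  obtain K where K: "\<And>t z w. norm (truncated_rhs t z w) \<le> K" using truncated_rhs_bounded by blast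
  interpret lipschitz_delay_equation \<tau> L K truncated_rhs \<phi>
    using delay_nonneg \<open>0 \<le> L\<close> truncated_rhs_continuous L K initial
    by unfold_locales (auto simp: in_Cplus_def)
  show ?thesis using solution_exists by (auto simp: truncated_solution_def)
qed

lemma truncated_solution_in_box:
  assumes "truncated_solution u" "-\<tau> \<le> t"
  shows "0 \<le> u t \<and> u t \<le> M"
proof (cases "t \<le> 0")
  case True
  then show ?thesis using assms initial_nonneg initial_le by (auto simp: truncated_solution_def)
next
  case False
  have "0 \<le> u t $ i \<and> u t $ i \<le> M $ i" for i
  proof -
    have continuous: "continuous_on {0..} (\<lambda>s. u s $ i)"
      using assms(1) by (auto simp: truncated_solution_def intro: continuous_intros continuous_on_subset)
    have deriv: "((\<lambda>s. u s $ i) has_real_derivative truncated_rhs s (u s) (u (s - \<tau>)) $ i) (at s)" if "0 < s" for s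
      using assms(1) that
      by (intro has_vector_derivative_nth has_vector_derivative_at_if_within_atLeast[of _ _ _ 0])
        (auto simp: truncated_solution_def)
    have start: "0 \<le> u 0 $ i" "u 0 $ i \<le> M $ i"
      using assms(1) initial_nonneg[of 0] initial_le[of 0] delay_nonneg
      by (auto simp: truncated_solution_def less_eq_vec_def)
    have "0 \<le> u t $ i"
    proof (rule DERIV_nonneg_below_imp_ge[OF continuous start(1)])
      fix s :: real assume "0 < s" "u s $ i < 0"
      then show "\<exists>d. ((\<lambda>s. u s $ i) has_real_derivative d) (at s) \<and> 0 \<le> d"
        using deriv truncated_rhs_nonneg_below by blast
    qed (use False in simp)
    moreover have "u t $ i \<le> M $ i"
    proof (rule DERIV_nonpos_above_imp_le[OF continuous start(2)])
      fix s :: real assume "0 < s" "M $ i < u s $ i"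
      then show "\<exists>d. ((\<lambda>s. u s $ i) has_real_derivative d) (at s) \<and> d \<le> 0"
        using deriv truncated_rhs_nonpos_above by blast
    qed (use False in simp)
    ultimately show ?thesis ..
  qed
  then show ?thesis by (simp add: less_eq_vec_def)
qed

lemma truncated_solution_is_solution:
  assumes "truncated_solution u"
  shows "solution \<phi> u"
proof -
  have clamp: "box_clamp M (u s) = u s" if "-\<tau> \<le> s" for s
    using truncated_solution_in_box[OF assms that] box_clamp_id by blast
  have deriv: "(u has_vector_derivative truncated_rhs t (u t) (u (t - \<tau>))) (at t within {0..})" if "0 \<le> t" for t
    using assms that by (simp add: truncated_solution_def)
  have population: "u s $ 3 + u s $ 4 = vector_population \<phi> s" if "-\<tau> \<le> s" for s
  proof (rule vector_population_eq[OF _ _ that])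
    show "u \<theta> = \<phi> \<theta>" if "\<theta> \<in> {-\<tau>..0}" for \<theta> using assms that by (simp add: truncated_solution_def)
    fix t :: real assume "0 \<le> t"
    let ?G = "truncated_rhs t (u t) (u (t - \<tau>))"
    have "((\<lambda>s. u s $ 3 + u s $ 4) has_real_derivative ?G $ 3 + ?G $ 4) (at t within {0..})"
      using deriv[OF \<open>0 \<le> t\<close>] by (intro DERIV_add has_vector_derivative_nth)
    moreover have "?G $ 3 + ?G $ 4 = \<beta>v - \<mu>v * (u t $ 3 + u t $ 4)"
      using clamp[of t] \<open>0 \<le> t\<close> delay_nonneg
      by (simp only: truncated_rhs_def rhs_with_fractions_vector_total)
    ultimately show "((\<lambda>s. u s $ 3 + u s $ 4) has_real_derivative \<beta>v - \<mu>v * (u t $ 3 + u t $ 4)) (at t within {0..})"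
      by simp
  qed
  have fraction_eq: "fraction s (u s) = u s $ 4 / (u s $ 3 + u s $ 4)" if "-\<tau> \<le> s" for s
  proof -
    have "0 \<le> u s $ 3" using truncated_solution_in_box[OF assms that] by (simp add: less_eq_vec_def)
    then have "u s $ 4 / vector_population \<phi> s \<le> 1"
      using population[OF that] population_pos[of s] by simp
    then show ?thesis using population[OF that] by (simp add: fraction_def)
  qed
  have "truncated_rhs t (u t) (u (t - \<tau>)) = rhs \<beta>h \<beta>v \<mu>h \<mu>v Cvh Chv (u t) (u (t - \<tau>))" if "0 \<le> t" for t
    using clamp[of t] clamp[of "t - \<tau>"] fraction_eq[of t] fraction_eq[of "t - \<tau>"] that delay_nonneg
    by (simp add: truncated_rhs_def rhs_eq_rhs_with_fractions)
  then show ?thesis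
    using assms deriv unfolding is_solution_def truncated_solution_def by (auto intro: continuous_on_subset)
qed

end

context vector_host_system
begin

lemma nonneg_solution_exists:
  assumes "in_Cplus \<tau> \<phi>"
  shows "\<exists>x. solution \<phi> x \<and> (\<forall>t\<ge>0. 0 \<le> x t)"
proof -
  obtain B where B: "\<And>\<theta>. \<theta> \<in> {-\<tau>..0} \<Longrightarrow> norm (\<phi> \<theta>) \<le> B"
    using continuous_on_Icc_norm_bound assms unfolding in_Cplus_def by blast
  have "0 \<in> {-\<tau>..0}" using delay_nonneg by simp
  then have "0 \<le> B" using B norm_ge_zero order_trans by blast
  define M1 where "M1 = B + \<beta>h/\<mu>h"
  define M2 where "M2 = B + Cvh * M1/\<mu>h"
  define M3 where "M3 = B + \<beta>v/\<mu>v"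
  define M4 where "M4 = B + Chv * M2 * M3/\<mu>v"
  define M :: "real^4" where "M = (\<chi> i. if i = 1 then M1 else if i = 2 then M2 else if i = 3 then M3 else M4)"
  have M_nth: "M $ 1 = M1" "M $ 2 = M2" "M $ 3 = M3" "M $ 4 = M4" by (simp_all add: M_def)
  have "\<mu>h * M1 = \<mu>h * B + \<beta>h" "\<mu>h * M2 = \<mu>h * B + Cvh * M1"
    "\<mu>v * M3 = \<mu>v * B + \<beta>v" "\<mu>v * M4 = \<mu>v * B + Chv * M2 * M3"
    using \<mu>h_pos \<mu>v_pos by (simp_all add: M1_def M2_def M3_def M4_def field_simps)
  then have caps: "\<beta>h \<le> \<mu>h * M1" "Cvh * M1 \<le> \<mu>h * M2" "\<beta>v \<le> \<mu>v * M3" "Chv * M2 * M3 \<le> \<mu>v * M4"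
    using \<open>0 \<le> B\<close> \<mu>h_pos \<mu>v_pos by simp_all
  have "0 \<le> M1" "0 \<le> M3" using \<open>0 \<le> B\<close> \<beta>h_pos \<beta>v_pos \<mu>h_pos \<mu>v_pos by (simp_all add: M1_def M3_def)
  then have "B \<le> M1" "B \<le> M2" "B \<le> M3" "B \<le> M4"
    using \<open>0 \<le> B\<close> \<beta>h_pos \<beta>v_pos \<mu>h_pos \<mu>v_pos Cvh_pos Chv_pos
    by (simp_all add: M1_def M2_def M3_def M4_def)
  then have "B \<le> M $ i" for i using exhaust_4[of i] M_nth by auto
  then have "\<phi> \<theta> \<le> M" if "\<theta> \<in> {-\<tau>..0}" for \<theta>
    using B[OF that] component_le_norm_cart[of "\<phi> \<theta>"] abs_ge_self order_trans unfolding less_eq_vec_def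
    by metis
  then interpret vector_host_truncation \<beta>h \<beta>v \<mu>h \<mu>v Cvh Chv \<tau> \<phi> M
    using assms caps by unfold_locales (simp_all add: M_nth)
  obtain u where "truncated_solution u" using truncated_solution_exists by blast
  then show ?thesis using truncated_solution_is_solution truncated_solution_in_box delay_nonneg by force
qed

lemma solution_nonneg:
  assumes "in_Cplus \<tau> \<phi>" "solution \<phi> x" "0 \<le> t"
  shows "0 \<le> x t $ i"
proof -
  obtain y where "solution \<phi> y" "\<And>t. 0 \<le> t \<Longrightarrow> 0 \<le> y t" using nonneg_solution_exists[OF assms(1)] by blast
  then show ?thesis
    using solution_unique[OF assms(1,2) \<open>solution \<phi> y\<close>, of t] assms(3) delay_nonneg
    by (simp add: less_eq_vec_def)
qed

context
  fixes \<phi> x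
  assumes initial: "in_Cplus \<tau> \<phi>" and x_solution: "solution \<phi> x"
begin

lemma solution_derivative_nth:
  assumes "0 < t"
  shows "((\<lambda>s. x s $ i) has_real_derivative rhs \<beta>h \<beta>v \<mu>h \<mu>v Cvh Chv (x t) (x (t - \<tau>)) $ i) (at t)"
  using x_solution assms
  by (intro has_vector_derivative_nth has_vector_derivative_at_if_within_atLeast[of _ _ _ 0])
    (auto simp: is_solution_def)

lemma solution_fraction_bounds:
  assumes "0 \<le> t"
  shows "0 \<le> x t $ 4 / (x t $ 3 + x t $ 4)" "x t $ 4 / (x t $ 3 + x t $ 4) \<le> 1"
  using solution_nonneg[OF initial x_solution assms, of 3] solution_nonneg[OF initial x_solution assms, of 4]
  by (auto simp: divide_le_eq_1)

lemma eventually_susceptible_hosts_le: "eventually (\<lambda>t. x t $ 1 \<le> \<beta>h/\<mu>h + 1) at_top"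
proof (rule DERIV_le_decay_imp_eventually_le[where f = "\<lambda>s. x s $ 1" and a = 1, OF \<mu>h_pos zero_less_one])
  fix t :: real assume "1 \<le> t"
  have "0 \<le> Cvh * (x t $ 4 / (x t $ 3 + x t $ 4)) * x t $ 1"
    using Cvh_pos solution_fraction_bounds solution_nonneg[OF initial x_solution] \<open>1 \<le> t\<close> by simp
  then have "rhs \<beta>h \<beta>v \<mu>h \<mu>v Cvh Chv (x t) (x (t - \<tau>)) $ 1 \<le> \<beta>h - \<mu>h * x t $ 1"
    by (simp add: rhs_eq_rhs_with_fractions)
  then show "\<exists>d. ((\<lambda>s. x s $ 1) has_real_derivative d) (at t) \<and> d \<le> \<beta>h - \<mu>h * x t $ 1"
    using solution_derivative_nth[of t 1] \<open>1 \<le> t\<close> by auto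
qed

lemma eventually_infected_hosts_le:
  "eventually (\<lambda>t. x t $ 2 \<le> Cvh * (\<beta>h/\<mu>h + 1) / \<mu>h + 1) at_top"
proof -
  obtain T where T: "\<And>t. T \<le> t \<Longrightarrow> x t $ 1 \<le> \<beta>h/\<mu>h + 1"
    using eventually_susceptible_hosts_le by (auto simp: eventually_at_top_linorder)
  show ?thesis
  proof (rule DERIV_le_decay_imp_eventually_le[where f = "\<lambda>s. x s $ 2" and a = "max T 0 + \<tau> + 1",
        OF \<mu>h_pos zero_less_one])
    fix t :: real assume "max T 0 + \<tau> + 1 \<le> t"
    then have "0 \<le> t - \<tau>" "T \<le> t - \<tau>" "0 < t" using delay_nonneg by auto
    let ?r = "x (t - \<tau>) $ 4 / (x (t - \<tau>) $ 3 + x (t - \<tau>) $ 4)"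
    have "?r * x (t - \<tau>) $ 1 \<le> 1 * (\<beta>h/\<mu>h + 1)"
      using solution_fraction_bounds[OF \<open>0 \<le> t - \<tau>\<close>] solution_nonneg[OF initial x_solution \<open>0 \<le> t - \<tau>\<close>]
        T[OF \<open>T \<le> t - \<tau>\<close>]
      by (intro mult_mono) auto
    then have "Cvh * (?r * x (t - \<tau>) $ 1) \<le> Cvh * (\<beta>h/\<mu>h + 1)"
      using Cvh_pos by (intro mult_left_mono) auto
    moreover have "rhs \<beta>h \<beta>v \<mu>h \<mu>v Cvh Chv (x t) (x (t - \<tau>)) $ 2 = Cvh * (?r * x (t - \<tau>) $ 1) - \<mu>h * x t $ 2"
      by (simp add: rhs_eq_rhs_with_fractions mult.assoc)
    ultimately show "\<exists>d. ((\<lambda>s. x s $ 2) has_real_derivative d) (at t) \<and> d \<le> Cvh * (\<beta>h/\<mu>h + 1) - \<mu>h * x t $ 2"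
      using solution_derivative_nth[OF \<open>0 < t\<close>, of 2] by force
  qed
qed

lemma eventually_vectors_le: "eventually (\<lambda>t. x t $ 3 + x t $ 4 \<le> \<beta>v/\<mu>v + 1) at_top"
proof (rule DERIV_le_decay_imp_eventually_le[where f = "\<lambda>s. x s $ 3 + x s $ 4" and a = 1,
      OF \<mu>v_pos zero_less_one])
  fix t :: real assume "1 \<le> t"
  let ?F = "rhs \<beta>h \<beta>v \<mu>h \<mu>v Cvh Chv (x t) (x (t - \<tau>))"
  have "((\<lambda>s. x s $ 3 + x s $ 4) has_real_derivative ?F $ 3 + ?F $ 4) (at t)"
    using solution_derivative_nth \<open>1 \<le> t\<close> by (intro DERIV_add) auto
  moreover have "?F $ 3 + ?F $ 4 = \<beta>v - \<mu>v * (x t $ 3 + x t $ 4)"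
    by (simp only: rhs_eq_rhs_with_fractions rhs_with_fractions_vector_total)
  ultimately show "\<exists>d. ((\<lambda>s. x s $ 3 + x s $ 4) has_real_derivative d) (at t) \<and> d \<le> \<beta>v - \<mu>v * (x t $ 3 + x t $ 4)"
    by auto
qed

lemma solution_ultimately_bounded:
  "eventually (\<lambda>t. norm (x t) \<le> (\<beta>h/\<mu>h + 1) + (Cvh * (\<beta>h/\<mu>h + 1) / \<mu>h + 1) + (\<beta>v/\<mu>v + 1)) at_top"
  using eventually_susceptible_hosts_le eventually_infected_hosts_le eventually_vectors_le
    eventually_ge_at_top[of 0]
proof eventually_elim
  case (elim t)
  have "norm (x t) \<le> (\<Sum>i\<in>UNIV. \<bar>x t $ i\<bar>)" by (rule norm_le_l1_cart)
  also have "\<dots> = x t $ 1 + x t $ 2 + (x t $ 3 + x t $ 4)"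
    using solution_nonneg[OF initial x_solution elim(4)] by (simp add: sum_4)
  finally show ?case using elim by linarith
qed

end

end

theorem theorem1:
  fixes \<beta>h \<beta>v \<mu>h \<mu>v Cvh Chv \<tau> :: real
  assumes "\<beta>h > 0" "\<beta>v > 0" "\<mu>h > 0" "\<mu>v > 0" "Cvh > 0" "Chv > 0" "\<tau> \<ge> 0"
  shows "(\<forall>\<phi>. in_Cplus \<tau> \<phi> \<longrightarrow>
            (\<exists>x. is_solution \<beta>h \<beta>v \<mu>h \<mu>v Cvh Chv \<tau> \<phi> x) \<and>
            (\<forall>x y. is_solution \<beta>h \<beta>v \<mu>h \<mu>v Cvh Chv \<tau> \<phi> x \<longrightarrow>
                   is_solution \<beta>h \<beta>v \<mu>h \<mu>v Cvh Chv \<tau> \<phi> y \<longrightarrow>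
                   (\<forall>t\<ge>-\<tau>. x t = y t)) \<and>
            (\<forall>x. is_solution \<beta>h \<beta>v \<mu>h \<mu>v Cvh Chv \<tau> \<phi> x \<longrightarrow>
                   (\<forall>t\<ge>0. \<forall>i. 0 \<le> x t $ i))) \<and>
         (\<exists>B. \<forall>\<phi> x. in_Cplus \<tau> \<phi> \<longrightarrow> is_solution \<beta>h \<beta>v \<mu>h \<mu>v Cvh Chv \<tau> \<phi> x \<longrightarrow>
                 (\<exists>T. \<forall>t\<ge>T. norm (x t) \<le> B))"
proof -
  interpret vector_host_system \<beta>h \<beta>v \<mu>h \<mu>v Cvh Chv \<tau>
    using assms by unfold_locales
  have "\<exists>T. \<forall>t\<ge>T. norm (x t) \<le> (\<beta>h/\<mu>h + 1) + (Cvh * (\<beta>h/\<mu>h + 1) / \<mu>h + 1) + (\<beta>v/\<mu>v + 1)"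
    if "in_Cplus \<tau> \<phi>" "solution \<phi> x" for \<phi> x
    using solution_ultimately_bounded[OF that] by (simp add: eventually_at_top_linorder)
  then show ?thesis
    using nonneg_solution_exists solution_unique solution_nonneg by blast
qed

end
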